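(* Let $U$ be a complete length $\mathrm{CAT}(\kappa)$ space, $\lambda\in\mathbb{R}$, $s\ge0$. Let $f_t$ and $h_t$ be two families of $\lambda$-concave functions with a common domain $\Omega\subset U\times\mathbb{R}$ (open), such that $|f_t(x)-h_t(x)|\le s$ for all $(x,t)\in\Omega$. Let $\alpha$ and $\beta$ be an $f_t$-gradient curve and an $h_t$-gradient curve, respectively, defined on a common interval $[a,b)$, and set $\ell(t)=|\alpha(t)-\beta(t)|$. Assume that for every $t\in[a,b)$ some minimizing geodesic $[\alpha(t)\beta(t)]$ lies in $\{x\in U:(x,t)\in\Omega\}$. Then at every $t$ where $\ell'(t)$ exists and $\ell(t)>0$, $\ell'(t)\le\lambda\,\ell(t)+2s/\ell(t)$, and, if $\lambda\ne0$, for all $t\in[a,b)$ $\ell(t)^2+\tfrac{2s}{\lambda}\le\bigl(\ell(a)^2+\tfrac{2s}{\lambda}\bigr)e^{2\lambda(t-a)}$. In particular, if $f_t=h_t$ (so $s=0$), then $\ell(t)\le\ell(a)\,e^{\lambda(t-a)}$ for all $t\in[a,b)$.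
   Context: A function $f$ is $\lambda$-concave if $s\mapsto f(\sigma(s))-\tfrac\lambda2 s^2$ is concave along every unit-speed geodesic $\sigma$ in its domain; a family $f_t$ is $\lambda$-concave if each $f_t$ is. For $q\in U$, $T_q$ is the tangent cone, $\uparrow_q^p\in T_q$ the unit direction of a geodesic $[qp]$, and $d_qf(\uparrow_q^p)$ the right derivative at $0$ of $f$ along the unit-speed geodesic from $q$ to $p$. Given functions $f_t$ on open sets $\mathrm{Dom}f_t$ with $\{(x,t):x\in\mathrm{Dom}f_t\}$ open, a Lipschitz curve $\alpha$ is an $f_t$-gradient curve if for every point $p$ and time $t$ for which a geodesic $[\alpha(t)\,p]$ exists, $|p-\alpha(t+\epsilon)|\le|p-\alpha(t)|-\epsilon\cdot d_{\alpha(t)}f_t(\uparrow_{\alpha(t)}^p)+o(\epsilon)$ as $\epsilon\to0^+$. *)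

theory Defs
  imports "HOL-Analysis.Analysis"
begin

definition geodesic_path :: "(real \<Rightarrow> 'a::metric_space) \<Rightarrow> 'a \<Rightarrow> 'a \<Rightarrow> bool" where
  "geodesic_path \<gamma> x y \<longleftrightarrow>
     \<gamma> 0 = x \<and> \<gamma> (dist x y) = y \<and>
     (\<forall>r\<in>{0..dist x y}. \<forall>r'\<in>{0..dist x y}. dist (\<gamma> r) (\<gamma> r') = \<bar>r - r'\<bar>)"

definition unit_geodesic_on :: "real set \<Rightarrow> (real \<Rightarrow> 'a::metric_space) \<Rightarrow> bool" where
  "unit_geodesic_on I \<sigma> \<longleftrightarrow> is_interval I \<and>
     (\<forall>r\<in>I. \<forall>r'\<in>I. dist (\<sigma> r) (\<sigma> r') = \<bar>r - r'\<bar>)"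

text \<open>Length space: the distance is the infimum of the lengths of curves
  (length = supremum over partitions of the sums of distances).\<close>
definition length_space :: "'a::metric_space itself \<Rightarrow> bool" where
  "length_space _ \<longleftrightarrow>
     (\<forall>x y::'a. \<forall>e>0. \<exists>c::real \<Rightarrow> 'a. continuous_on {0..1} c \<and> c 0 = x \<and> c 1 = y \<and>
        (\<forall>(n::nat) (t::nat \<Rightarrow> real). t 0 = 0 \<and> t n = 1 \<and> (\<forall>i<n. t i \<le> t (Suc i)) \<longrightarrow>
            (\<Sum>i<n. dist (c (t i)) (c (t (Suc i)))) \<le> dist x y + e))"

definition varpi :: "real \<Rightarrow> ereal" where
  "varpi \<kappa> = (if \<kappa> > 0 then ereal (pi / sqrt \<kappa>) else \<infinity>)"

text \<open>Point-on-side comparison in the model plane of curvature kappa: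
  for a triangle with side lengths a = |xy|, b = |xz|, c = |yz| > 0 and a point
  p on the side [yz] with |yp| = s, the model distance from the model vertex x
  to the model point p is at least d.  Expressed via the model cosine laws.\<close>
definition model_pos :: "real \<Rightarrow> real \<Rightarrow> real \<Rightarrow> real \<Rightarrow> real \<Rightarrow> real \<Rightarrow> bool" where
  "model_pos \<kappa> a b c s d \<longleftrightarrow>
     (if \<kappa> > 0 then
        (let k = sqrt \<kappa> in
          cos (k * d) \<ge> (cos (k * a) * sin (k * (c - s)) + cos (k * b) * sin (k * s)) / sin (k * c))
      else if \<kappa> = 0 then
        d\<^sup>2 \<le> ((c - s) * a\<^sup>2 + s * b\<^sup>2) / c - s * (c - s)
      else
        (let k = sqrt (- \<kappa>) in
          cosh (k * d) \<le> (cosh (k * a) * sinh (k * (c - s)) + cosh (k * b) * sinh (k * s)) / sinh (k * c)))"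

definition CAT :: "real \<Rightarrow> 'a::metric_space itself \<Rightarrow> bool" where
  "CAT \<kappa> _ \<longleftrightarrow>
     (\<forall>x y::'a. ereal (dist x y) < varpi \<kappa> \<longrightarrow> (\<exists>\<gamma>. geodesic_path \<gamma> x y)) \<and>
     (\<forall>x y z::'a. \<forall>\<gamma> s.
        ereal (dist x y + dist x z + dist y z) < 2 * varpi \<kappa> \<and>
        geodesic_path \<gamma> y z \<and> 0 < dist y z \<and> s \<in> {0..dist y z} \<longrightarrow>
        model_pos \<kappa> (dist x y) (dist x z) (dist y z) s (dist x (\<gamma> s)))"

definition lambda_concave :: "real \<Rightarrow> 'a::metric_space set \<Rightarrow> ('a \<Rightarrow> real) \<Rightarrow> bool" where
  "lambda_concave lam D f \<longleftrightarrow>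
     (\<forall>I \<sigma>. unit_geodesic_on I \<sigma> \<and> \<sigma> ` I \<subseteq> D \<longrightarrow>
        concave_on I (\<lambda>r. f (\<sigma> r) - lam / 2 * r\<^sup>2))"

definition slice :: "('a \<times> real) set \<Rightarrow> real \<Rightarrow> 'a set" where
  "slice \<Omega> t = {x. (x, t) \<in> \<Omega>}"

definition lambda_concave_family :: "real \<Rightarrow> ('a::metric_space \<times> real) set \<Rightarrow> (real \<Rightarrow> 'a \<Rightarrow> real) \<Rightarrow> bool" where
  "lambda_concave_family lam \<Omega> f \<longleftrightarrow> (\<forall>t. lambda_concave lam (slice \<Omega> t) (f t))"

text \<open>The right derivative at 0 of f along the geodesic gamma (ereal-valued
  limit of difference quotients); D is d_q f(up_q^p).\<close>
definition dir_deriv :: "('a::metric_space \<Rightarrow> real) \<Rightarrow> (real \<Rightarrow> 'a) \<Rightarrow> ereal \<Rightarrow> bool" where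
  "dir_deriv f \<gamma> D \<longleftrightarrow>
     ((\<lambda>r. ereal ((f (\<gamma> r) - f (\<gamma> 0)) / r)) \<longlongrightarrow> D) (at_right 0)"

definition gradient_curve :: "('a::metric_space \<times> real) set \<Rightarrow> (real \<Rightarrow> 'a \<Rightarrow> real) \<Rightarrow>
    (real \<Rightarrow> 'a) \<Rightarrow> real \<Rightarrow> real \<Rightarrow> bool" where
  "gradient_curve \<Omega> f \<alpha> a b \<longleftrightarrow>
     (\<exists>C. C-lipschitz_on {a..<b} \<alpha>) \<and>
     (\<forall>t\<in>{a..<b}. (\<alpha> t, t) \<in> \<Omega>) \<and>
     (\<forall>t\<in>{a..<b}. \<forall>p \<gamma> D. p \<noteq> \<alpha> t \<and> geodesic_path \<gamma> (\<alpha> t) p \<and> dir_deriv (f t) \<gamma> D \<longrightarrow>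
        (\<forall>e>0. \<forall>\<^sub>F \<epsilon> in at_right 0.
            ereal (dist p (\<alpha> (t + \<epsilon>))) \<le> ereal (dist p (\<alpha> t)) - ereal \<epsilon> * D + ereal (e * \<epsilon>)))"

end

theory Submission
  imports Defs
begin

text \<open>
  Let \<open>m\<close> be the midpoint of a geodesic \<open>[\<alpha>(t) \<beta>(t)]\<close> of length \<open>\<ell>\<close>. By \<open>\<lambda>\<close>-concavity of
  \<open>f\<^sub>t\<close> along the geodesic, its directional derivative at \<open>\<alpha>(t)\<close> towards \<open>\<beta>(t)\<close> is at least the
  chord slope \<open>(f\<^sub>t(\<beta>(t)) - f\<^sub>t(\<alpha>(t)))/\<ell> - \<lambda>\<ell>/2\<close>, so the gradient-curve inequality bounds the
  growth of \<open>|m \<alpha>(t+\<epsilon>)|\<close>; symmetrically for \<open>\<beta>\<close> and \<open>h\<^sub>t\<close>. Adding the two bounds, the triangle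
  inequality through \<open>m\<close> and \<open>|f\<^sub>t - h\<^sub>t| \<le> s\<close> give the upper Dini derivative bound
  \<open>\<ell>' \<le> \<lambda>\<ell> + 2s/\<ell>\<close>. Hence \<open>(\<ell>\<^sup>2 + 2s/\<lambda>)'\<close> is at most \<open>2\<lambda>(\<ell>\<^sup>2 + 2s/\<lambda>)\<close>, which integrates to the
  exponential bound by a Dini-derivative version of the monotonicity theorem.
\<close>

section \<open>Upper Dini derivatives\<close>

text \<open>\<open>D\<^sup>+g(t) \<le> K\<close> for the upper right Dini derivative, in the \<open>\<epsilon>\<close>-\<open>e\<close> form of the
  gradient-curve inequality.\<close>

definition upper_dini_le :: "(real \<Rightarrow> real) \<Rightarrow> real \<Rightarrow> real \<Rightarrow> bool" where
  "upper_dini_le g t K \<longleftrightarrow>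
     (\<forall>e>0. \<forall>\<^sub>F \<epsilon> in at_right 0. g (t + \<epsilon>) \<le> g t + \<epsilon> * K + e * \<epsilon>)"

lemma eventually_at_right_0_less:
  fixes \<delta> :: real
  assumes "0 < \<delta>"
  shows "\<forall>\<^sub>F \<epsilon> in at_right 0. 0 < \<epsilon> \<and> \<epsilon> < \<delta>"
  using assms eventually_at_right_field by blast

lemma upper_dini_le_mono:
  assumes "upper_dini_le g t K" "K \<le> K'"
  shows "upper_dini_le g t K'"
  unfolding upper_dini_le_def
proof (intro allI impI)
  fix e :: real assume "0 < e"
  with assms(1) have "\<forall>\<^sub>F \<epsilon> in at_right 0. g (t + \<epsilon>) \<le> g t + \<epsilon> * K + e * \<epsilon>"
    by (auto simp: upper_dini_le_def)
  with eventually_at_right_less[of 0]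
  show "\<forall>\<^sub>F \<epsilon> in at_right 0. g (t + \<epsilon>) \<le> g t + \<epsilon> * K' + e * \<epsilon>"
  proof eventually_elim
    case (elim \<epsilon>)
    then show ?case using mult_left_mono[OF \<open>K \<le> K'\<close>, of \<epsilon>] by linarith
  qed
qed

lemma upper_dini_le_add:
  assumes "upper_dini_le g t K" "upper_dini_le h t K'"
  shows "upper_dini_le (\<lambda>x. g x + h x) t (K + K')"
  unfolding upper_dini_le_def
proof (intro allI impI)
  fix e :: real assume "0 < e"
  then have "\<forall>\<^sub>F \<epsilon> in at_right 0. g (t + \<epsilon>) \<le> g t + \<epsilon> * K + e / 2 * \<epsilon>"
    "\<forall>\<^sub>F \<epsilon> in at_right 0. h (t + \<epsilon>) \<le> h t + \<epsilon> * K' + e / 2 * \<epsilon>"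
    using assms[unfolded upper_dini_le_def, rule_format, of "e / 2"] \<open>0 < e\<close> by simp_all
  then show "\<forall>\<^sub>F \<epsilon> in at_right 0. g (t + \<epsilon>) + h (t + \<epsilon>) \<le> g t + h t + \<epsilon> * (K + K') + e * \<epsilon>"
    by eventually_elim (simp add: algebra_simps)
qed

lemma upper_dini_le_add_const_iff [simp]:
  "upper_dini_le (\<lambda>x. g x + c) t K \<longleftrightarrow> upper_dini_le g t K"
  by (simp add: upper_dini_le_def ac_simps)

lemma upper_dini_le_dominated:
  assumes "\<And>x. g x \<le> h x" "g t = h t" "upper_dini_le h t K"
  shows "upper_dini_le g t K"
  unfolding upper_dini_le_def
proof (intro allI impI)
  fix e :: real assume "0 < e"
  with assms(3) have "\<forall>\<^sub>F \<epsilon> in at_right 0. h (t + \<epsilon>) \<le> h t + \<epsilon> * K + e * \<epsilon>"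
    by (simp add: upper_dini_le_def)
  then show "\<forall>\<^sub>F \<epsilon> in at_right 0. g (t + \<epsilon>) \<le> g t + \<epsilon> * K + e * \<epsilon>"
    by eventually_elim (use assms(1,2) in \<open>metis order_trans\<close>)
qed

lemma upper_dini_le_lipschitz:
  assumes g: "C-lipschitz_on {a..<b} g" and t: "t \<in> {a..<b}"
  shows "upper_dini_le g t C"
  unfolding upper_dini_le_def
proof (intro allI impI)
  fix e :: real assume "0 < e"
  from t have "\<forall>\<^sub>F \<epsilon> in at_right 0. 0 < \<epsilon> \<and> \<epsilon> < b - t"
    by (intro eventually_at_right_0_less) auto
  then show "\<forall>\<^sub>F \<epsilon> in at_right 0. g (t + \<epsilon>) \<le> g t + \<epsilon> * C + e * \<epsilon>"
  proof eventually_elim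
    case (elim \<epsilon>)
    with t have "dist (g (t + \<epsilon>)) (g t) \<le> C * dist (t + \<epsilon>) t"
      by (intro lipschitz_onD[OF g]) auto
    then have "g (t + \<epsilon>) \<le> g t + \<epsilon> * C"
      using elim by (simp add: dist_real_def abs_le_iff mult.commute)
    moreover have "0 \<le> e * \<epsilon>" using elim \<open>0 < e\<close> by simp
    ultimately show ?case by linarith
  qed
qed

lemma upper_dini_le_power2:
  assumes nonneg: "\<And>x. 0 \<le> g x" and g: "upper_dini_le g t K"
  shows "upper_dini_le (\<lambda>x. (g x)\<^sup>2) t (2 * g t * K)"
  unfolding upper_dini_le_def
proof (intro allI impI)
  fix e :: real assume e: "0 < e"
  define e' where "e' = e / (4 * (g t + 1))"
  have e': "0 < e'" "2 * g t * e' \<le> e / 2"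
    using e nonneg[of t] by (auto simp: e'_def field_simps)
  define M where "M = (K + e')\<^sup>2 + 1"
  have M: "0 < M" by (simp add: M_def add_nonneg_pos)
  have "\<forall>\<^sub>F \<epsilon> in at_right 0. g (t + \<epsilon>) \<le> g t + \<epsilon> * K + e' * \<epsilon>"
    using g e' by (simp add: upper_dini_le_def)
  moreover have "\<forall>\<^sub>F \<epsilon> in at_right 0. 0 < \<epsilon> \<and> \<epsilon> < e / (2 * M)"
    using e M by (intro eventually_at_right_0_less) simp
  ultimately show "\<forall>\<^sub>F \<epsilon> in at_right 0. (g (t + \<epsilon>))\<^sup>2 \<le> (g t)\<^sup>2 + \<epsilon> * (2 * g t * K) + e * \<epsilon>"
  proof eventually_elim
    case (elim \<epsilon>)
    have "(g (t + \<epsilon>))\<^sup>2 \<le> (g t + \<epsilon> * (K + e'))\<^sup>2"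
      using elim(1) nonneg[of "t + \<epsilon>"] by (intro power_mono) (simp_all add: algebra_simps)
    also have "\<dots> = (g t)\<^sup>2 + \<epsilon> * (2 * g t * K) + \<epsilon> * (2 * g t * e') + \<epsilon> * (\<epsilon> * (K + e')\<^sup>2)"
      by (simp add: power2_eq_square algebra_simps)
    also have "\<epsilon> * (2 * g t * e') \<le> \<epsilon> * (e / 2)"
      using elim(2) e' by (intro mult_left_mono) auto
    also have "\<epsilon> * (K + e')\<^sup>2 \<le> e / 2"
    proof -
      have "\<epsilon> * (K + e')\<^sup>2 \<le> \<epsilon> * M" using elim(2) by (simp add: M_def)
      also have "\<dots> \<le> e / 2" using elim(2) M by (simp add: field_simps)
      finally show ?thesis .
    qed
    then have "\<epsilon> * (\<epsilon> * (K + e')\<^sup>2) \<le> \<epsilon> * (e / 2)"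
      using elim(2) by (intro mult_left_mono) auto
    finally show ?case by (simp add: algebra_simps)
  qed
qed

lemma continuous_on_Icc_le_right_end:
  fixes \<phi> :: "real \<Rightarrow> real"
  assumes "continuous_on {a..b} \<phi>" "a < b" "\<And>u. a \<le> u \<Longrightarrow> u < b \<Longrightarrow> \<phi> u \<le> c"
  shows "\<phi> b \<le> c"
proof (rule tendsto_upperbound)
  show "(\<phi> \<longlongrightarrow> \<phi> b) (at_left b)" using assms(1,2) by (rule continuous_on_Icc_at_leftD)
  show "\<forall>\<^sub>F u in at_left b. \<phi> u \<le> c"
    using eventually_at_left_real[OF assms(2)] by eventually_elim (use assms(3) in auto)
qed simp

lemma upper_dini_nonpos_imp_le_linear:
  fixes \<psi> :: "real \<Rightarrow> real"
  assumes cont: "continuous_on {a..T} \<psi>"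
    and dini: "\<And>t. t \<in> {a..<T} \<Longrightarrow> upper_dini_le \<psi> t 0"
    and "a \<le> T" "0 < \<delta>"
  shows "\<psi> T \<le> \<psi> a + \<delta> * (T - a)"
proof -
  \<comment> \<open>\<open>\<sigma>\<close> is how far \<open>\<psi>\<close> stays below the line \<open>g\<close>; continuity and the Dini bound at \<open>\<sigma>\<close> force \<open>\<sigma> = T\<close>.\<close>
  define g where "g u = \<psi> a + \<delta> * (u - a)" for u
  define A where "A = {x \<in> {a..T}. \<forall>u\<in>{a..x}. \<psi> u \<le> g u}"
  define \<sigma> where "\<sigma> = Sup A"
  have "a \<in> A" using \<open>a \<le> T\<close> by (auto simp: A_def g_def)
  have bdd: "bdd_above A" by (auto simp: A_def bdd_above_def)
  have \<sigma>: "a \<le> \<sigma>" "\<sigma> \<le> T"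
    unfolding \<sigma>_def using \<open>a \<in> A\<close> bdd by (auto intro!: cSup_upper cSup_least simp: A_def)
  have below: "\<psi> u \<le> g u" if "a \<le> u" "u < \<sigma>" for u
  proof -
    obtain x where "x \<in> A" "u < x"
      using \<open>u < \<sigma>\<close> \<open>a \<in> A\<close> less_cSupE[of u A] by (auto simp: \<sigma>_def)
    with that show ?thesis by (auto simp: A_def)
  qed
  have at_\<sigma>: "\<psi> \<sigma> \<le> g \<sigma>"
  proof (cases "\<sigma> = a")
    case False
    with \<sigma> have "a < \<sigma>" by simp
    have "continuous_on {a..\<sigma>} (\<lambda>u. \<psi> u - g u)"
      using continuous_on_subset[OF cont] \<sigma> by (auto simp: g_def intro!: continuous_intros)
    then have "\<psi> \<sigma> - g \<sigma> \<le> 0"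
      by (rule continuous_on_Icc_le_right_end[OF _ \<open>a < \<sigma>\<close>]) (use below in simp)
    then show ?thesis by simp
  qed (simp add: g_def)
  have "\<sigma> = T"
  proof (rule ccontr)
    assume "\<sigma> \<noteq> T"
    with \<sigma> have "\<sigma> \<in> {a..<T}" by simp
    then have "\<forall>\<^sub>F \<epsilon> in at_right 0. \<psi> (\<sigma> + \<epsilon>) \<le> \<psi> \<sigma> + \<delta> * \<epsilon>"
      using dini[unfolded upper_dini_le_def] \<open>0 < \<delta>\<close> by simp
    then obtain c where c: "0 < c" "\<And>\<epsilon>. 0 < \<epsilon> \<Longrightarrow> \<epsilon> < c \<Longrightarrow> \<psi> (\<sigma> + \<epsilon>) \<le> \<psi> \<sigma> + \<delta> * \<epsilon>"
      unfolding eventually_at_right_field by auto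
    define y where "y = min (c / 2) (T - \<sigma>)"
    have y: "0 < y" "y < c" "\<sigma> + y \<le> T" using c \<open>\<sigma> \<in> {a..<T}\<close> by (auto simp: y_def)
    have "\<psi> u \<le> g u" if "u \<in> {a..\<sigma> + y}" for u
    proof -
      consider "u < \<sigma>" | "u = \<sigma>" | "\<sigma> < u" by linarith
      then show ?thesis
      proof cases
        case 3
        then have "\<psi> u \<le> \<psi> \<sigma> + \<delta> * (u - \<sigma>)" using c(2)[of "u - \<sigma>"] that y by auto
        with at_\<sigma> show ?thesis by (simp add: g_def algebra_simps)
      qed (use below that at_\<sigma> in auto)
    qed
    with y \<sigma> have "\<sigma> + y \<in> A" by (auto simp: A_def)
    then have "\<sigma> + y \<le> \<sigma>" unfolding \<sigma>_def using bdd by (rule cSup_upper)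
    with y show False by simp
  qed
  with at_\<sigma> show ?thesis by (simp add: g_def)
qed

lemma upper_dini_nonpos_imp_le:
  fixes \<psi> :: "real \<Rightarrow> real"
  assumes cont: "continuous_on {a..<b} \<psi>"
    and dini: "\<And>t. t \<in> {a..<b} \<Longrightarrow> upper_dini_le \<psi> t 0"
    and T: "T \<in> {a..<b}"
  shows "\<psi> T \<le> \<psi> a"
proof (cases "T = a")
  case False
  with T have "a < T" by simp
  have "\<psi> T \<le> \<psi> a + e" if "0 < e" for e
  proof -
    have "\<psi> T \<le> \<psi> a + e / (T - a) * (T - a)"
      using T that \<open>a < T\<close>
      by (intro upper_dini_nonpos_imp_le_linear continuous_on_subset[OF cont] dini) auto
    with \<open>a < T\<close> show ?thesis by simp
  qed
  then show ?thesis by (rule field_le_epsilon)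
qed simp

lemma has_real_derivative_le_upper_dini:
  assumes der: "(g has_real_derivative D) (at t within {a..<b})"
    and dini: "upper_dini_le g t K" and t: "t \<in> {a..<b}"
  shows "D \<le> K"
proof -
  obtain t' where t': "t < t'" "t' < b" using t dense by auto
  have "(g has_real_derivative D) (at t within {t..t'})"
    using t t' by (intro has_field_derivative_subset[OF der]) auto
  then have "((\<lambda>y. (g y - g t) / (y - t)) \<longlongrightarrow> D) (at_right t)"
    using t' by (simp add: has_field_derivative_iff at_within_Icc_at_right)
  then have lim: "((\<lambda>\<epsilon>. (g (t + \<epsilon>) - g t) / \<epsilon>) \<longlongrightarrow> D) (at_right 0)"
    by (simp add: filterlim_at_right_to_0[of _ _ t] ac_simps)
  have "D \<le> K + e" if "0 < e" for e
  proof (rule tendsto_upperbound[OF lim])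
    have "\<forall>\<^sub>F \<epsilon> in at_right 0. g (t + \<epsilon>) \<le> g t + \<epsilon> * K + e * \<epsilon>"
      using dini that by (simp add: upper_dini_le_def)
    with eventually_at_right_less[of 0]
    show "\<forall>\<^sub>F \<epsilon> in at_right 0. (g (t + \<epsilon>) - g t) / \<epsilon> \<le> K + e"
      by eventually_elim (simp add: field_simps)
  qed simp
  then show ?thesis by (rule field_le_epsilon)
qed

lemma upper_dini_le_mult:
  assumes u: "upper_dini_le u t K"
    and w: "(w has_real_derivative w') (at t)" and pos: "0 < w t"
  shows "upper_dini_le (\<lambda>x. u x * w x) t (K * w t + u t * w')"
  unfolding upper_dini_le_def
proof (intro allI impI)
  fix e :: real assume e: "0 < e"
  define e' where "e' = e / (2 * (w t + 1))"
  have e': "0 < e'" "e' * w t < e / 2"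
    using e pos by (auto simp: e'_def field_simps)
  have "(\<lambda>\<epsilon>. w (t + \<epsilon>)) \<midarrow>0\<rightarrow> w t"
    using DERIV_isCont[OF w] unfolding isCont_def by (rule LIM_offset_zero)
  then have w_cont: "((\<lambda>\<epsilon>. w (t + \<epsilon>)) \<longlongrightarrow> w t) (at_right 0)"
    by (rule tendsto_mono[OF at_le[OF subset_UNIV]])
  have "((\<lambda>\<epsilon>. (w (t + \<epsilon>) - w t) / \<epsilon>) \<longlongrightarrow> w') (at_right 0)"
    using w unfolding DERIV_def by (rule tendsto_mono[OF at_le[OF subset_UNIV]])
  then have "((\<lambda>\<epsilon>. u t * ((w (t + \<epsilon>) - w t) / \<epsilon>) + (K + e') * w (t + \<epsilon>))
      \<longlongrightarrow> u t * w' + (K + e') * w t) (at_right 0)"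
    by (intro tendsto_intros w_cont)
  then have "\<forall>\<^sub>F \<epsilon> in at_right 0. u t * ((w (t + \<epsilon>) - w t) / \<epsilon>) + (K + e') * w (t + \<epsilon>)
      < u t * w' + (K + e') * w t + e / 2"
    using e by (intro order_tendstoD) auto
  moreover have "\<forall>\<^sub>F \<epsilon> in at_right 0. 0 < w (t + \<epsilon>)"
    using w_cont pos by (rule order_tendstoD)
  moreover have "\<forall>\<^sub>F \<epsilon> in at_right 0. u (t + \<epsilon>) \<le> u t + \<epsilon> * K + e' * \<epsilon>"
    using u e' by (simp add: upper_dini_le_def)
  ultimately show "\<forall>\<^sub>F \<epsilon> in at_right 0. u (t + \<epsilon>) * w (t + \<epsilon>) \<le> u t * w t + \<epsilon> * (K * w t + u t * w') + e * \<epsilon>"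
    using eventually_at_right_less[of 0]
  proof eventually_elim
    case (elim \<epsilon>)
    have "u (t + \<epsilon>) * w (t + \<epsilon>) \<le> (u t + \<epsilon> * (K + e')) * w (t + \<epsilon>)"
      using elim by (intro mult_right_mono) (auto simp: algebra_simps)
    also have "\<dots> = u t * w t + \<epsilon> * (u t * ((w (t + \<epsilon>) - w t) / \<epsilon>) + (K + e') * w (t + \<epsilon>))"
      using elim by (simp add: field_simps)
    also have "\<dots> \<le> u t * w t + \<epsilon> * (u t * w' + (K + e') * w t + e / 2)"
      using elim by (intro add_left_mono mult_left_mono) auto
    also have "\<dots> = u t * w t + \<epsilon> * (K * w t + u t * w') + \<epsilon> * (e' * w t) + \<epsilon> * (e / 2)"
      by (simp add: algebra_simps)
    also have "\<epsilon> * (e' * w t) \<le> \<epsilon> * (e / 2)"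
      using elim e' by (intro mult_left_mono) auto
    finally show ?case by (simp add: field_simps)
  qed
qed

section \<open>Geodesics and semiconcave functions\<close>

lemma geodesic_path_dist:
  assumes "geodesic_path \<gamma> x y" "r \<in> {0..dist x y}" "r' \<in> {0..dist x y}"
  shows "dist (\<gamma> r) (\<gamma> r') = \<bar>r - r'\<bar>"
  using assms by (simp add: geodesic_path_def)

lemma geodesic_path_imp_unit_geodesic_on:
  assumes "geodesic_path \<gamma> x y"
  shows "unit_geodesic_on {0..dist x y} \<gamma>"
  using assms by (simp add: geodesic_path_def unit_geodesic_on_def is_interval_cc)

lemma geodesic_path_reverse:
  assumes "geodesic_path \<gamma> x y"
  shows "geodesic_path (\<lambda>r. \<gamma> (dist x y - r)) y x"
  using assms by (auto simp: geodesic_path_def dist_commute abs_minus_commute)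

lemma geodesic_path_initial_segment:
  assumes \<gamma>: "geodesic_path \<gamma> x y" and r: "r \<in> {0..dist x y}"
  shows "geodesic_path \<gamma> x (\<gamma> r)" "dist x (\<gamma> r) = r"
proof -
  show "dist x (\<gamma> r) = r"
    using geodesic_path_dist[OF \<gamma>, of 0 r] r \<gamma> by (auto simp: geodesic_path_def)
  then show "geodesic_path \<gamma> x (\<gamma> r)"
    using \<gamma> r by (auto simp: geodesic_path_def)
qed

lemma lambda_concave_along_geodesic:
  assumes "lambda_concave lam D F" "geodesic_path \<gamma> x y" "\<gamma> ` {0..dist x y} \<subseteq> D"
  shows "concave_on {0..dist x y} (\<lambda>r. F (\<gamma> r) - lam / 2 * r\<^sup>2)"
  using assms(1) geodesic_path_imp_unit_geodesic_on[OF assms(2)] assms(3)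
  unfolding lambda_concave_def by blast

lemma concave_on_diff_quotient_antimono:
  fixes g :: "real \<Rightarrow> real"
  assumes "concave_on {0..L} g" "0 < r" "r \<le> r'" "r' \<le> L"
  shows "(g r' - g 0) / r' \<le> (g r - g 0) / r"
proof (cases "r = r'")
  case False
  have "convex_on {0..L} (\<lambda>x. - g x)" using assms(1) by (simp add: concave_on_def)
  from convex_on_slope_le(1)[OF this, of 0 r' r] False assms
  show ?thesis by (simp add: field_simps)
qed simp

lemma concave_on_diff_quotient_tendsto:
  fixes g :: "real \<Rightarrow> real"
  assumes conc: "concave_on {0..L} g" and "0 < L"
  shows "((\<lambda>r. ereal ((g r - g 0) / r)) \<longlongrightarrow> (SUP r\<in>{0<..L}. ereal ((g r - g 0) / r))) (at_right 0)"
proof (rule increasing_tendsto)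
  show "\<forall>\<^sub>F r in at_right 0. ereal ((g r - g 0) / r) \<le> (SUP r\<in>{0<..L}. ereal ((g r - g 0) / r))"
    using eventually_at_right_0_less[OF \<open>0 < L\<close>] by eventually_elim (auto intro!: SUP_upper)
next
  fix x assume "x < (SUP r\<in>{0<..L}. ereal ((g r - g 0) / r))"
  then obtain r0 where r0: "r0 \<in> {0<..L}" "x < ereal ((g r0 - g 0) / r0)"
    by (auto simp: less_SUP_iff)
  have "\<forall>\<^sub>F r in at_right 0. 0 < r \<and> r < r0"
    using r0(1) by (intro eventually_at_right_0_less) simp
  then show "\<forall>\<^sub>F r in at_right 0. x < ereal ((g r - g 0) / r)"
  proof eventually_elim
    case (elim r)
    with r0 have "(g r0 - g 0) / r0 \<le> (g r - g 0) / r"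
      by (intro concave_on_diff_quotient_antimono[OF conc]) auto
    with r0(2) show ?case by (simp add: order_less_le_trans)
  qed
qed

lemma semiconcave_dir_deriv_ge_chord:
  fixes F :: "'a::metric_space \<Rightarrow> real"
  assumes conc: "concave_on {0..L} (\<lambda>r. F (\<gamma> r) - lam / 2 * r\<^sup>2)" and "0 < L"
  shows "\<exists>S. dir_deriv F \<gamma> S \<and> ereal ((F (\<gamma> L) - F (\<gamma> 0)) / L - lam / 2 * L) \<le> S"
proof (intro exI conjI)
  define g where "g r = F (\<gamma> r) - lam / 2 * r\<^sup>2" for r
  define S where "S = (SUP r\<in>{0<..L}. ereal ((g r - g 0) / r))"
  have conc_g: "concave_on {0..L} g" using conc unfolding g_def[abs_def] .
  have "((\<lambda>r. ereal ((g r - g 0) / r) + ereal (lam / 2 * r)) \<longlongrightarrow> S + ereal (lam / 2 * 0)) (at_right 0)"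
    unfolding S_def
    by (intro tendsto_add_ereal_general concave_on_diff_quotient_tendsto[OF conc_g \<open>0 < L\<close>]
        tendsto_intros) simp
  moreover have "\<forall>\<^sub>F r in at_right 0.
      ereal ((g r - g 0) / r) + ereal (lam / 2 * r) = ereal ((F (\<gamma> r) - F (\<gamma> 0)) / r)"
    using eventually_at_right_less[of 0]
    by eventually_elim (simp add: g_def field_simps power2_eq_square)
  ultimately show "dir_deriv F \<gamma> S"
    unfolding dir_deriv_def by (auto intro: Lim_transform_eventually)
  have "ereal ((g L - g 0) / L) \<le> S"
    using \<open>0 < L\<close> unfolding S_def by (intro SUP_upper) auto
  moreover have "(g L - g 0) / L = (F (\<gamma> L) - F (\<gamma> 0)) / L - lam / 2 * L"
    using \<open>0 < L\<close> by (simp add: g_def field_simps power2_eq_square)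
  ultimately show "ereal ((F (\<gamma> L) - F (\<gamma> 0)) / L - lam / 2 * L) \<le> S" by simp
qed

lemma gradient_curve_upper_dini:
  assumes grad: "gradient_curve \<Omega> F c a b" and t: "t \<in> {a..<b}"
    and q: "q \<noteq> c t" "geodesic_path \<gamma> (c t) q"
    and S: "dir_deriv (F t) \<gamma> S" "ereal D \<le> S"
  shows "upper_dini_le (\<lambda>x. dist q (c x)) t (- D)"
proof -
  have variation: "\<forall>e>0. \<forall>\<^sub>F \<epsilon> in at_right 0.
      ereal (dist q (c (t + \<epsilon>))) \<le> ereal (dist q (c t)) - ereal \<epsilon> * S + ereal (e * \<epsilon>)"
    using grad t q S(1) unfolding gradient_curve_def by blast
  \<comment> \<open>An infinite directional derivative would make the gradient inequality impossible.\<close>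
  have "S \<noteq> \<infinity>"
  proof
    assume "S = \<infinity>"
    have "\<forall>\<^sub>F \<epsilon> in at_right (0::real). False"
      using variation[rule_format, OF zero_less_one] eventually_at_right_less[of 0]
    proof eventually_elim
      case (elim \<epsilon>)
      then have "ereal \<epsilon> * S = \<infinity>" using \<open>S = \<infinity>\<close> by simp
      with elim(1) show False by simp
    qed
    then show False by simp
  qed
  with S(2) obtain D' where D': "S = ereal D'" "D \<le> D'" by (cases S) auto
  have "upper_dini_le (\<lambda>x. dist q (c x)) t (- D')"
    unfolding upper_dini_le_def
  proof (intro allI impI)
    fix e :: real assume "0 < e"
    with variation show "\<forall>\<^sub>F \<epsilon> in at_right 0. dist q (c (t + \<epsilon>)) \<le> dist q (c t) + \<epsilon> * - D' + e * \<epsilon>"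
      by (auto simp: D'(1) elim: eventually_mono)
  qed
  then show ?thesis by (rule upper_dini_le_mono) (use D'(2) in simp)
qed

lemma gradient_curve_first_variation:
  assumes grad: "gradient_curve \<Omega> F c a b" and t: "t \<in> {a..<b}"
    and conc: "lambda_concave lam D (F t)"
    and \<gamma>: "geodesic_path \<gamma> (c t) p" "\<gamma> ` {0..dist (c t) p} \<subseteq> D" and "c t \<noteq> p"
    and \<rho>: "\<rho> \<in> {0<..dist (c t) p}"
  shows "upper_dini_le (\<lambda>x. dist (\<gamma> \<rho>) (c x)) t
           (lam / 2 * dist (c t) p - (F t p - F t (c t)) / dist (c t) p)"
proof -
  have \<gamma>_ends: "\<gamma> 0 = c t" "\<gamma> (dist (c t) p) = p" using \<gamma> by (auto simp: geodesic_path_def)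
  obtain S where S: "dir_deriv (F t) \<gamma> S"
    "ereal ((F t p - F t (c t)) / dist (c t) p - lam / 2 * dist (c t) p) \<le> S"
    using semiconcave_dir_deriv_ge_chord[where F = "F t" and \<gamma> = \<gamma>,
        OF lambda_concave_along_geodesic[OF conc \<gamma>]] \<open>c t \<noteq> p\<close> \<gamma>_ends
    by auto
  obtain "geodesic_path \<gamma> (c t) (\<gamma> \<rho>)" "dist (c t) (\<gamma> \<rho>) = \<rho>"
    using geodesic_path_initial_segment[OF \<gamma>(1)] \<rho> by auto
  with \<rho> have "upper_dini_le (\<lambda>x. dist (\<gamma> \<rho>) (c x)) t
      (- ((F t p - F t (c t)) / dist (c t) p - lam / 2 * dist (c t) p))"
    by (intro gradient_curve_upper_dini[OF grad t _ _ S]) auto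
  then show ?thesis by simp
qed

section \<open>Distance between two gradient curves\<close>

locale gradient_curve_pair =
  fixes \<Omega> :: "('u::metric_space \<times> real) set"
    and f h :: "real \<Rightarrow> 'u \<Rightarrow> real"
    and \<alpha> \<beta> :: "real \<Rightarrow> 'u"
    and a b lam s :: real
  assumes f_conc: "lambda_concave_family lam \<Omega> f"
    and h_conc: "lambda_concave_family lam \<Omega> h"
    and close: "\<forall>(x, t)\<in>\<Omega>. \<bar>f t x - h t x\<bar> \<le> s"
    and \<alpha>_grad: "gradient_curve \<Omega> f \<alpha> a b"
    and \<beta>_grad: "gradient_curve \<Omega> h \<beta> a b"
    and geod: "\<forall>t\<in>{a..<b}. \<exists>\<gamma>. geodesic_path \<gamma> (\<alpha> t) (\<beta> t) \<and>
                 (\<forall>r\<in>{0..dist (\<alpha> t) (\<beta> t)}. (\<gamma> r, t) \<in> \<Omega>)"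
begin

lemma close_at_curves:
  assumes "t \<in> {a..<b}"
  shows "\<bar>f t (\<alpha> t) - h t (\<alpha> t)\<bar> \<le> s" "\<bar>f t (\<beta> t) - h t (\<beta> t)\<bar> \<le> s"
  using assms \<alpha>_grad \<beta>_grad close by (auto simp: gradient_curve_def)

lemma dist_upper_dini:
  assumes t: "t \<in> {a..<b}" and "\<alpha> t \<noteq> \<beta> t"
  shows "upper_dini_le (\<lambda>x. dist (\<alpha> x) (\<beta> x)) t
           (lam * dist (\<alpha> t) (\<beta> t) + 2 * s / dist (\<alpha> t) (\<beta> t))"
proof -
  define l where "l = dist (\<alpha> t) (\<beta> t)"
  have "0 < l" using \<open>\<alpha> t \<noteq> \<beta> t\<close> by (simp add: l_def)
  obtain \<gamma> where \<gamma>: "geodesic_path \<gamma> (\<alpha> t) (\<beta> t)" and \<gamma>_\<Omega>: "\<forall>r\<in>{0..l}. (\<gamma> r, t) \<in> \<Omega>"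
    using geod t unfolding l_def by blast
  define \<gamma>' where "\<gamma>' r = \<gamma> (l - r)" for r
  have \<gamma>': "geodesic_path \<gamma>' (\<beta> t) (\<alpha> t)"
    using geodesic_path_reverse[OF \<gamma>] by (simp add: \<gamma>'_def[abs_def] l_def)
  have "\<gamma> ` {0..l} \<subseteq> slice \<Omega> t" "\<gamma>' ` {0..l} \<subseteq> slice \<Omega> t"
    using \<gamma>_\<Omega> by (auto simp: slice_def \<gamma>'_def)
  moreover have "lambda_concave lam (slice \<Omega> t) (f t)" "lambda_concave lam (slice \<Omega> t) (h t)"
    using f_conc h_conc by (simp_all add: lambda_concave_family_def)
  moreover have mid: "l / 2 \<in> {0<..l}" using \<open>0 < l\<close> by simp
  ultimately have "upper_dini_le (\<lambda>x. dist (\<gamma> (l / 2)) (\<alpha> x)) t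
        (lam / 2 * l - (f t (\<beta> t) - f t (\<alpha> t)) / l)"
      "upper_dini_le (\<lambda>x. dist (\<gamma>' (l / 2)) (\<beta> x)) t
        (lam / 2 * l - (h t (\<alpha> t) - h t (\<beta> t)) / l)"
    using gradient_curve_first_variation[OF \<alpha>_grad t _ \<gamma>] \<open>\<alpha> t \<noteq> \<beta> t\<close>
      gradient_curve_first_variation[OF \<beta>_grad t _ \<gamma>'] \<open>\<alpha> t \<noteq> \<beta> t\<close>
    by (simp_all add: l_def dist_commute)
  moreover have "\<gamma>' (l / 2) = \<gamma> (l / 2)" by (simp add: \<gamma>'_def)
  ultimately have sum: "upper_dini_le (\<lambda>x. dist (\<gamma> (l / 2)) (\<alpha> x) + dist (\<gamma> (l / 2)) (\<beta> x)) t
      ((lam / 2 * l - (f t (\<beta> t) - f t (\<alpha> t)) / l) + (lam / 2 * l - (h t (\<alpha> t) - h t (\<beta> t)) / l))"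
    by (intro upper_dini_le_add) simp_all
  have "dist (\<gamma> (l / 2)) (\<alpha> t) = l / 2" "dist (\<gamma> (l / 2)) (\<beta> t) = l / 2"
    using geodesic_path_initial_segment(2)[OF \<gamma>, of "l / 2"]
      geodesic_path_initial_segment(2)[OF \<gamma>', of "l / 2"] mid
    by (auto simp: \<gamma>'_def l_def dist_commute)
  \<comment> \<open>The triangle inequality through the midpoint, with equality at time \<open>t\<close>.\<close>
  with sum have "upper_dini_le (\<lambda>x. dist (\<alpha> x) (\<beta> x)) t
      ((lam / 2 * l - (f t (\<beta> t) - f t (\<alpha> t)) / l) + (lam / 2 * l - (h t (\<alpha> t) - h t (\<beta> t)) / l))"
    by (intro upper_dini_le_dominated[OF dist_triangle3]) (simp_all add: l_def)
  moreover have "- 2 * s / l \<le> ((f t (\<beta> t) - f t (\<alpha> t)) + (h t (\<alpha> t) - h t (\<beta> t))) / l"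
    using close_at_curves[OF t] \<open>0 < l\<close> by (intro divide_right_mono) auto
  then have "(lam / 2 * l - (f t (\<beta> t) - f t (\<alpha> t)) / l) + (lam / 2 * l - (h t (\<alpha> t) - h t (\<beta> t)) / l)
      \<le> lam * l + 2 * s / l"
    by (simp add: add_divide_distrib)
  ultimately show ?thesis
    unfolding l_def by (rule upper_dini_le_mono)
qed

lemma dist_curves_lipschitz: "\<exists>C. C-lipschitz_on {a..<b} (\<lambda>x. dist (\<alpha> x) (\<beta> x))"
proof -
  obtain C\<^sub>\<alpha> C\<^sub>\<beta> where C: "C\<^sub>\<alpha>-lipschitz_on {a..<b} \<alpha>" "C\<^sub>\<beta>-lipschitz_on {a..<b} \<beta>"
    using \<alpha>_grad \<beta>_grad by (auto simp: gradient_curve_def)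
  have "(C\<^sub>\<alpha> + C\<^sub>\<beta>)-lipschitz_on {a..<b} (\<lambda>x. dist (\<alpha> x) (\<beta> x))"
  proof (rule lipschitz_onI)
    fix x y assume "x \<in> {a..<b}" "y \<in> {a..<b}"
    then have "dist (\<alpha> x) (\<alpha> y) \<le> C\<^sub>\<alpha> * dist x y" "dist (\<beta> x) (\<beta> y) \<le> C\<^sub>\<beta> * dist x y"
      using C by (auto intro: lipschitz_onD)
    moreover have "\<bar>dist (\<alpha> x) (\<beta> x) - dist (\<beta> x) (\<alpha> y)\<bar> \<le> dist (\<alpha> x) (\<alpha> y)"
      "\<bar>dist (\<beta> x) (\<alpha> y) - dist (\<alpha> y) (\<beta> y)\<bar> \<le> dist (\<beta> x) (\<beta> y)"
      by (rule abs_dist_diff_le)+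
    ultimately show "dist (dist (\<alpha> x) (\<beta> x)) (dist (\<alpha> y) (\<beta> y)) \<le> (C\<^sub>\<alpha> + C\<^sub>\<beta>) * dist x y"
      by (simp add: dist_real_def dist_commute distrib_right)
  next
    show "0 \<le> C\<^sub>\<alpha> + C\<^sub>\<beta>" using lipschitz_on_nonneg[OF C(1)] lipschitz_on_nonneg[OF C(2)] by simp
  qed
  then show ?thesis ..
qed

lemma dist_sq_upper_dini:
  assumes t: "t \<in> {a..<b}"
  shows "upper_dini_le (\<lambda>x. (dist (\<alpha> x) (\<beta> x))\<^sup>2) t (2 * lam * (dist (\<alpha> t) (\<beta> t))\<^sup>2 + 4 * s)"
proof (cases "\<alpha> t = \<beta> t")
  case True
  obtain C where "C-lipschitz_on {a..<b} (\<lambda>x. dist (\<alpha> x) (\<beta> x))" using dist_curves_lipschitz ..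
  then have "upper_dini_le (\<lambda>x. (dist (\<alpha> x) (\<beta> x))\<^sup>2) t (2 * dist (\<alpha> t) (\<beta> t) * C)"
    using t by (intro upper_dini_le_power2 upper_dini_le_lipschitz) auto
  moreover have "0 \<le> s" using close_at_curves(1)[OF t] by linarith
  then have "2 * dist (\<alpha> t) (\<beta> t) * C \<le> 2 * lam * (dist (\<alpha> t) (\<beta> t))\<^sup>2 + 4 * s"
    using True by simp
  ultimately show ?thesis by (rule upper_dini_le_mono)
next
  case False
  then have "upper_dini_le (\<lambda>x. (dist (\<alpha> x) (\<beta> x))\<^sup>2) t
      (2 * dist (\<alpha> t) (\<beta> t) * (lam * dist (\<alpha> t) (\<beta> t) + 2 * s / dist (\<alpha> t) (\<beta> t)))"
    using t by (intro upper_dini_le_power2 dist_upper_dini) auto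
  moreover have "2 * dist (\<alpha> t) (\<beta> t) * (lam * dist (\<alpha> t) (\<beta> t) + 2 * s / dist (\<alpha> t) (\<beta> t))
      = 2 * lam * (dist (\<alpha> t) (\<beta> t))\<^sup>2 + 4 * s"
    using False by (simp add: field_simps power2_eq_square)
  ultimately show ?thesis by simp
qed

lemma dist_sq_add_growth:
  assumes c: "lam * c = 2 * s" and t: "t \<in> {a..<b}"
  shows "(dist (\<alpha> t) (\<beta> t))\<^sup>2 + c \<le> ((dist (\<alpha> a) (\<beta> a))\<^sup>2 + c) * exp (2 * lam * (t - a))"
proof -
  \<comment> \<open>\<open>u\<close> grows at rate at most \<open>2 lam u\<close>, so \<open>u\<close> times this weight is nonincreasing.\<close>
  define u where "u x = (dist (\<alpha> x) (\<beta> x))\<^sup>2 + c" for x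
  define w where "w x = exp (- (2 * lam * (x - a)))" for x
  have "u t * w t \<le> u a * w a"
  proof (rule upper_dini_nonpos_imp_le[OF _ _ t])
    obtain C where "C-lipschitz_on {a..<b} (\<lambda>x. dist (\<alpha> x) (\<beta> x))" using dist_curves_lipschitz ..
    then show "continuous_on {a..<b} (\<lambda>x. u x * w x)"
      unfolding u_def w_def by (intro continuous_intros lipschitz_on_continuous_on)
  next
    fix x assume x: "x \<in> {a..<b}"
    have "2 * lam * u x = 2 * lam * (dist (\<alpha> x) (\<beta> x))\<^sup>2 + 4 * s"
      using c by (simp add: u_def algebra_simps)
    then have "upper_dini_le u x (2 * lam * u x)"
      using dist_sq_upper_dini[OF x] by (simp add: u_def[abs_def])
    moreover have "(w has_real_derivative w x * - (2 * lam)) (at x)"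
      unfolding w_def by (auto intro!: derivative_eq_intros)
    ultimately have "upper_dini_le (\<lambda>x. u x * w x) x (2 * lam * u x * w x + u x * (w x * - (2 * lam)))"
      by (rule upper_dini_le_mult) (simp add: w_def)
    then show "upper_dini_le (\<lambda>x. u x * w x) x 0" by (simp add: algebra_simps)
  qed
  then have "u t / exp (2 * lam * (t - a)) \<le> u a"
    by (simp add: w_def exp_minus divide_inverse)
  then show ?thesis by (simp add: pos_divide_le_eq u_def)
qed

lemma dist_exp_growth:
  assumes "s = 0" "t \<in> {a..<b}"
  shows "dist (\<alpha> t) (\<beta> t) \<le> dist (\<alpha> a) (\<beta> a) * exp (lam * (t - a))"
proof (rule power2_le_imp_le)
  have "(dist (\<alpha> t) (\<beta> t))\<^sup>2 \<le> (dist (\<alpha> a) (\<beta> a))\<^sup>2 * exp (2 * lam * (t - a))"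
    using dist_sq_add_growth[of 0 t] assms by simp
  also have "\<dots> = (dist (\<alpha> a) (\<beta> a) * exp (lam * (t - a)))\<^sup>2"
    by (simp add: power_mult_distrib exp_double[symmetric] mult.assoc)
  finally show "(dist (\<alpha> t) (\<beta> t))\<^sup>2 \<le> (dist (\<alpha> a) (\<beta> a) * exp (lam * (t - a)))\<^sup>2" .
qed simp

end

theorem mainTheorem7:
  fixes \<kappa> lam s a b :: real
    and \<Omega> :: "('u::complete_space \<times> real) set"
    and f h :: "real \<Rightarrow> 'u \<Rightarrow> real"
    and \<alpha> \<beta> :: "real \<Rightarrow> 'u"
  defines "dl \<equiv> (\<lambda>t. dist (\<alpha> t) (\<beta> t))"
  assumes U_length: "length_space TYPE('u)"
    and U_CAT: "CAT \<kappa> TYPE('u)"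
    and s_nonneg: "0 \<le> s"
    and \<Omega>_open: "open \<Omega>"
    and f_conc: "lambda_concave_family lam \<Omega> f"
    and h_conc: "lambda_concave_family lam \<Omega> h"
    and close: "\<forall>(x, t)\<in>\<Omega>. \<bar>f t x - h t x\<bar> \<le> s"
    and \<alpha>_grad: "gradient_curve \<Omega> f \<alpha> a b"
    and \<beta>_grad: "gradient_curve \<Omega> h \<beta> a b"
    and geod: "\<forall>t\<in>{a..<b}. \<exists>\<gamma>. geodesic_path \<gamma> (\<alpha> t) (\<beta> t) \<and>
                  (\<forall>r\<in>{0..dl t}. (\<gamma> r, t) \<in> \<Omega>)"
  shows "(\<forall>t\<in>{a..<b}. \<forall>D. (dl has_real_derivative D) (at t within {a..<b}) \<and> dl t > 0 \<longrightarrow>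
            D \<le> lam * dl t + 2 * s / dl t)
       \<and> (lam \<noteq> 0 \<longrightarrow> (\<forall>t\<in>{a..<b}.
            (dl t)\<^sup>2 + 2 * s / lam \<le> ((dl a)\<^sup>2 + 2 * s / lam) * exp (2 * lam * (t - a))))
       \<and> (s = 0 \<longrightarrow> (\<forall>t\<in>{a..<b}. dl t \<le> dl a * exp (lam * (t - a))))"
proof -
  interpret gradient_curve_pair \<Omega> f h \<alpha> \<beta> a b lam s
    using f_conc h_conc close \<alpha>_grad \<beta>_grad geod by unfold_locales (simp_all add: dl_def)
  have "D \<le> lam * dl t + 2 * s / dl t"
    if t: "t \<in> {a..<b}" and der: "(dl has_real_derivative D) (at t within {a..<b})" and "dl t > 0"
    for t D
  proof (rule has_real_derivative_le_upper_dini[OF der _ t])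
    show "upper_dini_le dl t (lam * dl t + 2 * s / dl t)"
      using dist_upper_dini[OF t] \<open>dl t > 0\<close> by (simp add: dl_def)
  qed
  then show ?thesis
    using dist_sq_add_growth[of "2 * s / lam"] dist_exp_growth by (auto simp: dl_def)
qed

end
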